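(* For each integer $l \ge 2$ let $f_l(z) = \sum_{n\ge1}\gamma_l(n)q^n$ be a weight-$l$ CM newform (in $S_l(\Gamma_0(32))$ if $l$ is even, in $S_l(\Gamma_0(4),(\frac{-4}{\cdot}))$ if $l \equiv 1 \pmod 4$, in $S_l(\Gamma_0(16),(\frac{-4}{\cdot}))$ if $l \equiv 3 \pmod 4$) whose coefficients at odd primes $p$ are $$\gamma_l(p) = \begin{cases} (-1)^{\frac{(x+y-1)(l-1)}{2}}\left[(x+iy)^{l-1} + (x-iy)^{l-1}\right], & p \equiv 1 \pmod 4,\ p = x^2+y^2,\ x \text{ odd},\\ 0, & p \equiv 3 \pmod 4.\end{cases}$$ Let $k \ge 2$ be an integer. Then for every odd prime $p$ and every integer $m \geq 1$, $$\gamma_k(p)^m = \sum_{t=0}^{\lfloor \frac{m-1}{2}\rfloor}\binom{m}{t} p^{t(k-1)}\gamma_{(m-2t)(k-1)+1}(p) + \begin{cases}\binom{m}{m/2} p^{\frac m2 (k-1)}, & p \equiv 1 \pmod 4 \text{ and } m \text{ even},\\ 0, & \text{otherwise}.\end{cases}$$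
   Context: $q = e^{2\pi i z}$; $(\frac{-4}{\cdot})$ is the nontrivial Dirichlet character modulo $4$. A CM newform is a newform $\sum\gamma(n)q^n$ with $\gamma(p) = \psi(p)\gamma(p)$ for all primes $p$ in a set of density one, for some nontrivial real Dirichlet character $\psi$. (Such newforms $f_l$ exist for every $l \ge 2$.) *)

theory Defs
  imports Complex_Main "HOL-Computational_Algebra.Primes"
begin

text \<open>For p = 1 mod 4 we choose a
  representation p = x^2 + y^2 with x odd (the value does not depend on the
  choice); for p = 3 mod 4 the coefficient is 0.\<close>

definition cm_coeff :: "nat \<Rightarrow> nat \<Rightarrow> complex" where
  "cm_coeff l p =
     (if p mod 4 = 1 then
        (let (x, y) = (SOME (x, y). odd x \<and> int p = x^2 + y^2) :: int \<times> int
         in (if even (((x + y - 1) div 2) * (int l - 1)) then 1 else -1) *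
              ((of_int x + \<i> * of_int y) ^ (l - 1) + (of_int x - \<i> * of_int y) ^ (l - 1)))
      else 0)"

end

theory Submission
  imports Defs "HOL-Number_Theory.Number_Theory" "HOL-Library.Discrete_Functions"
begin

text \<open>For p = 1 mod 4, Fermat's two-squares theorem (proved here via Thue's lemma) gives
  p = x^2 + y^2. Absorbing the sign e = +-1 of the coefficient formula into the Gaussian integers,
  gamma_(n+1)(p) = c^n + d^n with c = e(x + iy), d = e(x - iy) and cd = p. The identity is then the
  binomial expansion of (A + B)^m for A = c^(k-1), B = d^(k-1), with the terms j and m - j paired.
  For p = 3 mod 4 both sides vanish.\<close>

lemma binomial_ring_paired:
  fixes A B :: "'a::comm_ring_1"
  shows "(A + B) ^ m =
    (\<Sum>t | 2 * t < m. of_nat (m choose t) * (A * B) ^ t * (A ^ (m - 2 * t) + B ^ (m - 2 * t)))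
    + (if even m then of_nat (m choose (m div 2)) * (A * B) ^ (m div 2) else 0)"
proof -
  define g where "g j = of_nat (m choose j) * A ^ j * B ^ (m - j)" for j
  define L where "L = {t. 2 * t < m}"
  define M where "M = {j. 2 * j = m}"
  have L_finite: "finite L"
    unfolding L_def by (rule finite_subset[of _ "{..m}"]) auto
  have M_finite: "finite M"
    unfolding M_def by (rule finite_subset[of _ "{..m}"]) auto
  have disjoint: "L \<inter> (\<lambda>t. m - t) ` L = {}" "(L \<union> (\<lambda>t. m - t) ` L) \<inter> M = {}"
    unfolding L_def M_def by auto
  have inj: "inj_on (\<lambda>t. m - t) L"
    unfolding L_def inj_on_def by auto
  have split: "{..m} = (L \<union> (\<lambda>t. m - t) ` L) \<union> M"
  proof (intro equalityI subsetI)
    fix j assume "j \<in> {..m}"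
    then have "j \<le> m" by simp
    then show "j \<in> (L \<union> (\<lambda>t. m - t) ` L) \<union> M"
      unfolding L_def M_def
      by (cases "2 * j < m"; cases "2 * j = m") (auto intro!: image_eqI[of j _ "m - j"])
  qed (auto simp: L_def M_def)
  have pair: "g t + g (m - t) = of_nat (m choose t) * (A * B) ^ t * (A ^ (m - 2 * t) + B ^ (m - 2 * t))"
    if "t \<in> L" for t
  proof -
    from that have e1: "m - t = t + (m - 2 * t)" and e2: "m - (m - t) = t"
      unfolding L_def by auto
    have c: "m choose (m - t) = m choose t"
      using that binomial_symmetric[of t m] unfolding L_def by simp
    have "g t = of_nat (m choose t) * (A * B) ^ t * B ^ (m - 2 * t)"
      unfolding g_def e1 power_add power_mult_distrib by (simp add: mult_ac)
    moreover have "g (m - t) = of_nat (m choose t) * A ^ (m - t) * B ^ t"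
      unfolding g_def e2 c ..
    then have "g (m - t) = of_nat (m choose t) * (A * B) ^ t * A ^ (m - 2 * t)"
      unfolding e1 power_add power_mult_distrib by (simp add: mult_ac)
    ultimately show ?thesis
      by (simp add: distrib_left)
  qed
  have middle: "sum g M = (if even m then of_nat (m choose (m div 2)) * (A * B) ^ (m div 2) else 0)"
  proof (cases "even m")
    case True
    then have "M = {m div 2}" "m - m div 2 = m div 2" unfolding M_def by auto
    with True show ?thesis by (simp add: g_def power_mult_distrib ac_simps)
  next
    case False
    then have "M = {}" unfolding M_def by auto
    with False show ?thesis by simp
  qed
  have "(A + B) ^ m = sum g {..m}"
    unfolding g_def by (simp add: binomial_ring)
  also have "\<dots> = sum g (L \<union> (\<lambda>t. m - t) ` L) + sum g M"
    unfolding split using L_finite M_finite disjoint(2) by (intro sum.union_disjoint) auto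
  also have "sum g (L \<union> (\<lambda>t. m - t) ` L) = sum g L + sum g ((\<lambda>t. m - t) ` L)"
    using L_finite disjoint(1) by (intro sum.union_disjoint) auto
  also have "sum g ((\<lambda>t. m - t) ` L) = (\<Sum>t\<in>L. g (m - t))"
    using inj by (simp add: sum.reindex)
  also have "sum g L + (\<Sum>t\<in>L. g (m - t)) =
      (\<Sum>t\<in>L. of_nat (m choose t) * (A * B) ^ t * (A ^ (m - 2 * t) + B ^ (m - 2 * t)))"
    unfolding sum.distrib[symmetric] by (rule sum.cong[OF refl pair])
  finally show ?thesis
    unfolding middle L_def .
qed

lemma prime_mod_4_eq_1_sqrt_minus_one:
  fixes p :: nat
  assumes "prime p" and "p mod 4 = 1"
  obtains a :: int where "[a ^ 2 = -1] (mod int p)"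
proof -
  have "2 < p" using assms prime_ge_2_nat[of p] by presburger
  moreover have "even ((p - 1) div 2)" using assms(2) by presburger
  ultimately have Legendre_cong: "[Legendre (-1) (int p) = 1] (mod int p)"
    using euler_criterion[OF assms(1), of "-1"] by simp
  have "Legendre (-1) (int p) = 1"
  proof (rule ccontr)
    assume "Legendre (-1) (int p) \<noteq> 1"
    then have "Legendre (-1) (int p) \<in> {0, -1}" unfolding Legendre_def by (auto split: if_splits)
    with Legendre_cong have "int p dvd 1 \<or> int p dvd 2"
      by (auto simp: cong_iff_dvd_diff dvd_minus_iff)
    with \<open>2 < p\<close> show False by (auto dest: zdvd_imp_le)
  qed
  then have "QuadRes (int p) (-1)" unfolding Legendre_def by (auto split: if_splits)
  then show ?thesis using that unfolding QuadRes_def by blast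
qed

lemma Thue_lemma:
  fixes a P s :: int
  assumes "0 < P" and "0 \<le> s" and "P < (s + 1) ^ 2"
  obtains x y where "(x, y) \<noteq> (0, 0)" "\<bar>x\<bar> \<le> s" "\<bar>y\<bar> \<le> s" "[x = a * y] (mod P)"
proof -
  define D where "D = {0..s} \<times> {0..s}"
  define f where "f = (\<lambda>(u, v). (u - a * v) mod P)"
  have "\<not> inj_on f D"
  proof
    assume "inj_on f D"
    moreover have "f ` D \<subseteq> {0..<P}" unfolding f_def using assms(1) by auto
    ultimately have "card D \<le> card {0..<P}" by (rule card_inj_on_le) simp
    moreover have "card D = nat ((s + 1) ^ 2)"
      unfolding D_def using assms(2) by (simp add: power2_eq_square nat_mult_distrib)
    ultimately show False using assms by simp
  qed
  then obtain u1 v1 u2 v2 where uv: "(u1, v1) \<in> D" "(u2, v2) \<in> D" "(u1, v1) \<noteq> (u2, v2)"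
    and "f (u1, v1) = f (u2, v2)"
    unfolding inj_on_def by auto
  then have "[u1 - a * v1 = u2 - a * v2] (mod P)" unfolding f_def cong_def by simp
  then have "[u1 - u2 = a * (v1 - v2)] (mod P)"
    by (simp add: cong_iff_dvd_diff algebra_simps)
  moreover have "(u1 - u2, v1 - v2) \<noteq> (0, 0)" "\<bar>u1 - u2\<bar> \<le> s" "\<bar>v1 - v2\<bar> \<le> s"
    using uv unfolding D_def by auto
  ultimately show ?thesis using that by blast
qed

lemma prime_mod_4_eq_1_sum_two_squares:
  fixes p :: nat
  assumes "prime p" and "p mod 4 = 1"
  obtains x y :: int where "odd x" "int p = x ^ 2 + y ^ 2"
proof -
  obtain a :: int where a: "[a ^ 2 = -1] (mod int p)"
    using prime_mod_4_eq_1_sqrt_minus_one[OF assms] .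
  define s where "s = int (floor_sqrt p)"
  have "s ^ 2 \<noteq> int p"
  proof
    assume "s ^ 2 = int p"
    then have "floor_sqrt p ^ 2 = p" unfolding s_def by (simp flip: of_nat_power)
    with \<open>prime p\<close> show False using prime_power_iff[of "floor_sqrt p" 2] by simp
  qed
  moreover have "s ^ 2 \<le> int p" unfolding s_def by (simp flip: of_nat_power)
  ultimately have s_sq: "s ^ 2 < int p" by simp
  have "int p < (s + 1) ^ 2"
    using Suc_floor_sqrt_power2_gt[of p] unfolding s_def
    by (metis of_nat_Suc of_nat_less_iff of_nat_power add.commute)
  moreover have "0 < int p" using assms(1) prime_gt_0_nat by simp
  ultimately obtain x y where xy: "(x, y) \<noteq> (0, 0)" "\<bar>x\<bar> \<le> s" "\<bar>y\<bar> \<le> s"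
    and "[x = a * y] (mod int p)"
    using Thue_lemma[of "int p" s a] unfolding s_def by auto
  then have "[x ^ 2 = a ^ 2 * y ^ 2] (mod int p)" by (metis cong_pow power_mult_distrib)
  also have "[a ^ 2 * y ^ 2 = -1 * y ^ 2] (mod int p)" using a by (rule cong_mult) simp
  finally have "int p dvd x ^ 2 + y ^ 2" by (simp add: cong_iff_dvd_diff)
  then obtain c where c: "x ^ 2 + y ^ 2 = int p * c" by blast
  have "0 < x ^ 2 + y ^ 2" using xy(1) by (simp add: sum_power2_gt_zero_iff)
  moreover have "x ^ 2 + y ^ 2 < 2 * int p"
    using xy(2,3) s_sq abs_le_square_iff[of x s] abs_le_square_iff[of y s] by simp
  ultimately have "0 < int p * c" "int p * c < int p * 2" using c by linarith+
  then have "0 < c" "c < 2"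
    using \<open>0 < int p\<close> by (simp_all add: zero_less_mult_iff)
  then have "c = 1" by simp
  with c have p_eq: "int p = x ^ 2 + y ^ 2" by simp
  have "odd x \<or> odd y"
  proof (rule ccontr)
    assume "\<not> (odd x \<or> odd y)"
    then have "4 dvd x ^ 2 + y ^ 2" by (auto simp: power2_eq_square elim!: evenE)
    with p_eq assms(2) show False by presburger
  qed
  with p_eq that show ?thesis by (metis add.commute)
qed

lemma cm_coeff_prime_mod_4_eq_1:
  fixes p :: nat
  assumes "prime p" and "p mod 4 = 1"
  obtains c d :: complex where "c * d = of_nat p" "\<And>n. cm_coeff (n + 1) p = c ^ n + d ^ n"
proof -
  obtain x y :: int where xy: "(SOME (x, y). odd x \<and> int p = x ^ 2 + y ^ 2) = (x, y)"
    by fastforce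
  obtain x0 y0 where "odd x0" "int p = x0 ^ 2 + y0 ^ 2"
    using prime_mod_4_eq_1_sum_two_squares[OF assms] .
  then have "\<exists>xy. (\<lambda>(x, y). odd x \<and> int p = x ^ 2 + y ^ 2) xy" by auto
  from someI_ex[OF this] have p_eq: "int p = x ^ 2 + y ^ 2" unfolding xy by simp
  define e :: complex where "e = (if even ((x + y - 1) div 2) then 1 else -1)"
  define a where "a = of_int x + \<i> * of_int y"
  define b where "b = of_int x - \<i> * of_int y"
  have "cm_coeff (n + 1) p = e ^ n * (a ^ n + b ^ n)" for n
  proof -
    have "(if even ((x + y - 1) div 2 * (int (n + 1) - 1)) then 1 else -1) = e ^ n"
      unfolding e_def by (auto simp: even_mult_iff)
    then show ?thesis
      using assms(2) xy unfolding cm_coeff_def a_def b_def by (simp add: Let_def)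
  qed
  moreover have "e * a * (e * b) = of_nat p"
  proof -
    have "e * a * (e * b) = (e * e) * (a * b)" by (simp only: mult_ac)
    also have "\<dots> = of_int (x ^ 2 + y ^ 2)"
      unfolding e_def a_def b_def by (simp add: algebra_simps power2_eq_square)
    finally show ?thesis unfolding p_eq [symmetric] by simp
  qed
  ultimately show ?thesis
    using that[of "e * a" "e * b"] by (simp add: power_mult_distrib distrib_left)
qed

theorem corollary4p2:
  fixes k p m :: nat
  assumes "k \<ge> 2" and "prime p" and "odd p" and "m \<ge> 1"
  shows "cm_coeff k p ^ m =
    (\<Sum>t = 0..(m - 1) div 2. of_nat (m choose t) * of_nat p ^ (t * (k - 1))
        * cm_coeff ((m - 2 * t) * (k - 1) + 1) p)
    + (if p mod 4 = 1 \<and> even m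
       then of_nat (m choose (m div 2)) * of_nat p ^ ((m div 2) * (k - 1)) else 0)"
proof (cases "p mod 4 = 1")
  case False
  then have "cm_coeff l p = 0" for l unfolding cm_coeff_def by simp
  with False assms(4) show ?thesis by simp
next
  case True
  obtain c d :: complex where cd: "c * d = of_nat p"
    and coeff: "\<And>n. cm_coeff (n + 1) p = c ^ n + d ^ n"
    using cm_coeff_prime_mod_4_eq_1[OF assms(2) True] by blast
  define A where "A = c ^ (k - 1)"
  define B where "B = d ^ (k - 1)"
  have "cm_coeff k p = A + B"
    using coeff[of "k - 1"] assms(1) unfolding A_def B_def by simp
  moreover have "(A * B) ^ t = of_nat p ^ (t * (k - 1))" for t
    unfolding A_def B_def power_mult_distrib[symmetric] cd by (simp add: mult.commute flip: power_mult)
  moreover have "cm_coeff (j * (k - 1) + 1) p = A ^ j + B ^ j" for j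
    unfolding coeff A_def B_def by (simp add: mult.commute flip: power_mult)
  moreover have "{t. 2 * t < m} = {0..(m - 1) div 2}"
    using assms(4) by auto
  ultimately show ?thesis
    using True binomial_ring_paired[of A B m] by simp
qed

end
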